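(* Let $w$ be a word and let $v$ be an explicit node of the Cover Suffix Tree $\mathit{CST}(w)$ other than the root, and let $v_1,v_2,\ldots,v_k$ be the consecutive implicit nodes on the edge from $v$ to its explicit parent, ordered so that $|v_i|=|v|-i$. Then for $1\le i\le k$, $$\c(v_i)=\c(v)-i\,\Delta(v);$$ in particular $(\c(v_i))_{i=1}^k$ is an arithmetic progression.
   Context: Positions of $w$ are $1,\ldots,n$. The suffix trie of $w$ has one node for each factor of $w$ (the root for the empty word), the parent of the node of $ua$ ($a$ a letter) being the node of $u$; for a node $v$, $\hat v$ denotes the corresponding factor and $|v|=|\hat v|$. In the suffix tree of $w$, the explicit nodes are the root, the nodes with at least two children, and the nodes corresponding to suffixes of $w$; all other nodes are implicit, and each edge is a maximal upward path of implicit nodes between an explicit node and its nearest explicit proper ancestor (its explicit parent). $\mathit{CST}(w)$ is obtained by additionally making explicit every node $v$ (an extra node) such that $\hat v\hat v$ is a factor of $w$ with $\hat v$ primitive (a word $u$ is primitive if $u=y^k$ implies $y=u$). $\mathit{Occ}(v,w)$ is the set of starting positions of occurrences of $\hat v$ in $w$; for a set $X$ of integers, $\mathrm{next}_X(x)=\min\{y\in X:y>x\}$ (or $\infty$ if $x=\max X$), and $\delta(i,v)=\mathrm{next}_{\mathit{Occ}(v,w)}(i)-i$ for $i\in \mathit{Occ}(v,w)$. $\mathit{Covered}(u,w)$ is the number of positions of $w$ lying within some occurrence of $u$. Finally $\c(v)=\mathit{Covered}(\hat v,w)$ and $\Delta(v)=|\{i\in\mathit{Occ}(v,w):\delta(i,v)\ge|v|\}|$.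 *)

theory Defs
  imports Main "HOL-Library.Sublist" "HOL-Library.Extended_Nat"
begin

text \<open>Words are lists; positions of w are 1..length w. Nodes of the suffix trie
are identified with the factors they represent (the root is the empty word);
the parent of the node of u@[a] is the node of u, so ancestors are prefixes.\<close>

definition primitive :: "'a list \<Rightarrow> bool" where
  "primitive u \<longleftrightarrow> (\<forall>y k. u = concat (replicate k y) \<longrightarrow> y = u)"

definition st_explicit :: "'a list \<Rightarrow> 'a list \<Rightarrow> bool" where
  "st_explicit w u \<longleftrightarrow> sublist u w \<and>
     (u = [] \<or> card {a. sublist (u @ [a]) w} \<ge> 2 \<or> suffix u w)"

definition cst_explicit :: "'a list \<Rightarrow> 'a list \<Rightarrow> bool" where
  "cst_explicit w u \<longleftrightarrow> st_explicit w u \<or>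
     (sublist u w \<and> sublist (u @ u) w \<and> primitive u)"

definition cst_parent_len :: "'a list \<Rightarrow> 'a list \<Rightarrow> nat" where
  "cst_parent_len w v = Max (length ` {u. strict_prefix u v \<and> cst_explicit w u})"

text \<open>Number k of implicit nodes on the edge from v to its explicit parent.\<close>
definition edge_len :: "'a list \<Rightarrow> 'a list \<Rightarrow> nat" where
  "edge_len w v = length v - cst_parent_len w v - 1"

definition Occ :: "'a list \<Rightarrow> 'a list \<Rightarrow> nat set" where
  "Occ u w = {i. 1 \<le> i \<and> i - 1 + length u \<le> length w \<and> take (length u) (drop (i - 1) w) = u}"

definition next_in :: "nat set \<Rightarrow> nat \<Rightarrow> enat" where
  "next_in X x = (if \<exists>y\<in>X. y > x then enat (Min {y\<in>X. y > x}) else \<infinity>)"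

definition delta :: "'a list \<Rightarrow> nat \<Rightarrow> 'a list \<Rightarrow> enat" where
  "delta w i v = next_in (Occ v w) i - enat i"

definition Covered :: "'a list \<Rightarrow> 'a list \<Rightarrow> nat" where
  "Covered u w = card {p. 1 \<le> p \<and> p \<le> length w \<and>
       (\<exists>i\<in>Occ u w. i \<le> p \<and> p < i + length u)}"

definition cov :: "'a list \<Rightarrow> 'a list \<Rightarrow> nat" where
  "cov w v = Covered v w"

definition Delta :: "'a list \<Rightarrow> 'a list \<Rightarrow> nat" where
  "Delta w v = card {i\<in>Occ v w. delta w i v \<ge> enat (length v)}"

end

theory Submission
  imports Defs
begin

text \<open>Since the nodes on the edge above \<open>v\<close> are neither branching nor suffixes of \<open>w\<close>,
each of them occurs exactly where \<open>v\<close> does. Shortening \<open>v\<close> by \<open>i\<close> letters therefore uncovers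
exactly the last \<open>i\<close> positions of every occurrence that is not followed by another occurrence
within distance \<open>|v|\<close>, provided every other occurrence is followed by one within distance at
most the length of the explicit parent. The latter holds because, if \<open>d < |v|\<close> is the gap to
the next occurrence, the prefix \<open>u\<close> of \<open>v\<close> of length \<open>d\<close> is primitive (a proper period of
\<open>u\<close> would produce an occurrence in between) and \<open>uu\<close> is a factor, so \<open>u\<close> is an explicit
node of the Cover Suffix Tree strictly above \<open>v\<close>.\<close>

lemma sublist_take_drop: "sublist (take n (drop k xs)) xs"
  using sublist_order.order_trans[OF sublist_take sublist_drop] by blast

lemma Occ_iff_nth:
  "j \<in> Occ u w \<longleftrightarrow> 1 \<le> j \<and> j - 1 + length u \<le> length w \<and>
     (\<forall>t<length u. w ! (j - 1 + t) = u ! t)"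
proof -
  have "take (length u) (drop (j - 1) w) = u \<longleftrightarrow> (\<forall>t<length u. w ! (j - 1 + t) = u ! t)"
    if "j - 1 + length u \<le> length w"
    using that by (auto simp: list_eq_iff_nth_eq)
  then show ?thesis unfolding Occ_def by blast
qed

lemma finite_Occ: "finite (Occ u w)"
  by (rule finite_subset[of _ "{..length w + 1}"]) (auto simp: Occ_def)

lemma Covered_eq_card_UN: "Covered u w = card (\<Union>j\<in>Occ u w. {j..<j + length u})"
  unfolding Covered_def by (rule arg_cong[where f = card]) (auto simp: Occ_def)

lemma delta_ge_iff:
  "enat L \<le> delta w j v \<longleftrightarrow> (\<forall>y\<in>Occ v w. j < y \<longrightarrow> j + L \<le> y)"
proof (cases "\<exists>y\<in>Occ v w. j < y")
  case True
  let ?Y = "{y\<in>Occ v w. j < y}"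
  have fin: "finite ?Y" using finite_Occ[of v w] by simp
  have ne: "?Y \<noteq> {}" using True by blast
  have "delta w j v = enat (Min ?Y - j)"
    using True by (simp add: delta_def next_in_def)
  then show ?thesis using Min_in[OF fin ne] Min_le[OF fin] by fastforce
next
  case False
  then show ?thesis by (simp add: delta_def next_in_def)
qed

lemma Delta_eq_card:
  "Delta w v = card {j\<in>Occ v w. \<forall>y\<in>Occ v w. j < y \<longrightarrow> j + length v \<le> y}"
  unfolding Delta_def delta_ge_iff ..

lemma square_at_Occ_pair:
  assumes "j \<in> Occ v w" and "j + d \<in> Occ v w" and "d \<le> length v"
  shows "sublist (take d v @ take d v) w"
proof -
  have j: "1 \<le> j" "take (length v) (drop (j - 1) w) = v"
    and jd: "take (length v) (drop (j + d - 1) w) = v"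
    using assms(1,2) by (auto simp: Occ_def)
  have "take d (drop (j - 1) w) = take d v"
    using j(2) assms(3) by (metis min.absorb1 take_take)
  moreover have "take d (drop d (drop (j - 1) w)) = take d v"
    using jd j(1) assms(3) by (metis Nat.add_diff_assoc2 add.commute drop_drop min.absorb1 take_take)
  ultimately have "take (d + d) (drop (j - 1) w) = take d v @ take d v"
    by (simp add: take_add)
  then show ?thesis by (metis sublist_take_drop)
qed

lemma nth_concat_replicate:
  "t < k * length z \<Longrightarrow> concat (replicate k z) ! t = z ! (t mod length z)"
proof (induction k arbitrary: t)
  case (Suc k)
  show ?case
  proof (cases "t < length z")
    case False
    then have "concat (replicate (Suc k) z) ! t = concat (replicate k z) ! (t - length z)"
      by (simp add: nth_append)
    also have "\<dots> = z ! (t mod length z)"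
      using Suc False by (simp add: le_mod_geq)
    finally show ?thesis .
  qed (simp add: nth_append)
qed simp

lemma periodic_extend_dvd:
  fixes f :: "nat \<Rightarrow> 'a"
  assumes "q dvd d" and "0 < d"
    and period: "\<And>s. d \<le> s \<Longrightarrow> s < n \<Longrightarrow> f s = f (s - d)"
    and prefix: "\<And>s. s < d \<Longrightarrow> f s = f (s mod q)"
  shows "s < n \<Longrightarrow> f s = f (s mod q)"
proof (induction s rule: less_induct)
  case (less s)
  show ?case
  proof (cases "s < d")
    case True
    then show ?thesis by (rule prefix)
  next
    case False
    then have "f s = f (s - d)" using period less.prems by (metis not_less)
    also have "\<dots> = f ((s - d) mod q)"
      using less.IH[of "s - d"] less.prems \<open>0 < d\<close> False by simp
    also have "(s - d) mod q = s mod q"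
    proof -
      obtain c where "d = q * c" using \<open>q dvd d\<close> ..
      then have "s = (s - d) + c * q" using False by simp
      then show ?thesis by (metis mod_mult_self1)
    qed
    finally show ?thesis .
  qed
qed

lemma primitive_take_gap_Occ:
  assumes j: "j \<in> Occ v w" and jd: "j + d \<in> Occ v w"
    and d: "0 < d" "d < length v"
    and no_between: "\<And>z. z \<in> Occ v w \<Longrightarrow> j < z \<Longrightarrow> z < j + d \<Longrightarrow> False"
  shows "primitive (take d v)"
  unfolding primitive_def
proof (intro allI impI)
  fix z k assume z: "take d v = concat (replicate k z)"
  define u where "u = take d v"
  define q where "q = length z"
  define f where "f s = w ! (j - 1 + s)" for s
  have "length (take d v) = d" using d by simp
  then have lu: "length u = d" "d = k * q"
    unfolding u_def q_def z by (simp_all add: length_concat sum_list_replicate)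
  show "z = take d v"
  proof (rule ccontr)
    assume "z \<noteq> take d v"
    then have "k \<noteq> 1" using z by auto
    with lu d have q: "0 < q" "q < d" "q dvd d"
      by (auto simp: nat_0_less_mult_iff)
    have j_occ: "1 \<le> j" "j - 1 + length v \<le> length w" "\<And>t. t < length v \<Longrightarrow> f t = v ! t"
      using j unfolding Occ_iff_nth f_def by auto
    have jd_occ: "\<And>t. t < length v \<Longrightarrow> f (d + t) = v ! t"
      using jd j_occ(1) unfolding Occ_iff_nth f_def by (simp add: algebra_simps)
    have periodic: "f s = f (s mod q)" if "s < d + length v" for s
    proof (rule periodic_extend_dvd[OF q(3) d(1) _ _ that])
      fix s assume "d \<le> s" "s < d + length v"
      then show "f s = f (s - d)" using jd_occ[of "s - d"] j_occ(3)[of "s - d"] by simp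
    next
      fix s assume "s < d"
      have "s mod q < d" using q by (meson mod_less_divisor less_trans)
      have "f s = u ! s" using \<open>s < d\<close> d j_occ(3) by (simp add: u_def)
      also have "\<dots> = z ! (s mod q)"
        using \<open>s < d\<close> lu z nth_concat_replicate[of s k z] by (simp add: u_def q_def)
      also have "\<dots> = u ! (s mod q)"
        using \<open>s mod q < d\<close> lu z nth_concat_replicate[of "s mod q" k z] by (simp add: u_def q_def)
      also have "\<dots> = f (s mod q)" using \<open>s mod q < d\<close> d j_occ(3) by (simp add: u_def)
      finally show "f s = f (s mod q)" .
    qed
    have "j + q \<in> Occ v w"
      unfolding Occ_iff_nth
    proof (intro conjI allI impI)
      show "1 \<le> j + q" using j_occ(1) by simp
      show "j + q - 1 + length v \<le> length w"
        using jd q j_occ(1) unfolding Occ_iff_nth by linarith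
      fix t assume t: "t < length v"
      have "w ! (j + q - 1 + t) = f (q + t)" using j_occ(1) by (simp add: f_def algebra_simps)
      also have "\<dots> = f t" using periodic[of "q + t"] periodic[of t] t q by simp
      also have "\<dots> = v ! t" using j_occ(3) t .
      finally show "w ! (j + q - 1 + t) = v ! t" .
    qed
    then show False using no_between[of "j + q"] q by simp
  qed
qed

lemma length_le_cst_parent_len:
  assumes "cst_explicit w u" and "strict_prefix u v"
  shows "length u \<le> cst_parent_len w v"
proof -
  have "finite (length ` {u. strict_prefix u v \<and> cst_explicit w u})"
    by (rule finite_subset[of _ "{..<length v}"]) (auto dest: prefix_length_less)
  then show ?thesis
    unfolding cst_parent_len_def using assms by (intro Max_ge) auto
qed

lemma Occ_snoc_eq:
  assumes not_suffix: "\<not> suffix u w" and unique: "\<And>b. sublist (u @ [b]) w \<Longrightarrow> b = a"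
  shows "Occ (u @ [a]) w = Occ u w"
proof
  show "Occ (u @ [a]) w \<subseteq> Occ u w"
  proof
    fix j assume "j \<in> Occ (u @ [a]) w"
    then have "1 \<le> j" "j - 1 + length u \<le> length w"
      and "take (length u) (take (Suc (length u)) (drop (j - 1) w)) = u"
      by (auto simp: Occ_def)
    then show "j \<in> Occ u w" by (simp add: Occ_def)
  qed
next
  show "Occ u w \<subseteq> Occ (u @ [a]) w"
  proof
    fix j assume "j \<in> Occ u w"
    then have j: "1 \<le> j" "j - 1 + length u \<le> length w" "take (length u) (drop (j - 1) w) = u"
      by (auto simp: Occ_def)
    have "j - 1 + length u < length w"
    proof (rule ccontr)
      assume "\<not> j - 1 + length u < length w"
      then have "drop (j - 1) w = u" using j(2,3) by simp
      then show False using not_suffix suffix_drop by metis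
    qed
    then have extend: "take (Suc (length u)) (drop (j - 1) w) = u @ [w ! (j - 1 + length u)]"
      using j(3) by (simp add: take_Suc_conv_app_nth)
    then have "sublist (u @ [w ! (j - 1 + length u)]) w"
      by (metis sublist_take_drop)
    then have "w ! (j - 1 + length u) = a" by (rule unique)
    with extend show "j \<in> Occ (u @ [a]) w"
      using j \<open>j - 1 + length u < length w\<close> by (simp add: Occ_def)
  qed
qed

lemma Occ_snoc_eq_if_not_cst_explicit:
  assumes not_explicit: "\<not> cst_explicit w u" and ua: "sublist (u @ [a]) w"
  shows "Occ (u @ [a]) w = Occ u w"
proof (rule Occ_snoc_eq)
  have "sublist u w"
    using ua sublist_order.order_trans[of u "u @ [a]" w] by simp
  then have not_st: "\<not> st_explicit w u"
    using not_explicit by (simp add: cst_explicit_def)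
  with \<open>sublist u w\<close> show "\<not> suffix u w"
    by (simp add: st_explicit_def)
  from not_st \<open>sublist u w\<close> have few: "card {b. sublist (u @ [b]) w} < 2"
    by (simp add: st_explicit_def)
  fix b assume b: "sublist (u @ [b]) w"
  have "finite {b. sublist (u @ [b]) w}"
    by (rule finite_subset[of _ "set w"]) (auto dest: set_mono_sublist)
  then have "card {a, b} \<le> card {b. sublist (u @ [b]) w}"
    using ua b by (intro card_mono) auto
  with few show "b = a" by (cases "b = a") auto
qed

lemma Occ_take_on_cst_edge:
  assumes "sublist v w" and "cst_parent_len w v < m" and "m \<le> length v"
  shows "Occ (take m v) w = Occ v w"
  using assms(3)
proof (induction m rule: inc_induct)
  case (step n)
  have "\<not> cst_explicit w (take n v)"
  proof
    assume "cst_explicit w (take n v)"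
    moreover have "strict_prefix (take n v) v"
      using step.hyps by (simp add: strict_prefix_def take_is_prefix)
    ultimately have "length (take n v) \<le> cst_parent_len w v"
      by (rule length_le_cst_parent_len)
    then show False using assms(2) step.hyps by simp
  qed
  moreover have "take (Suc n) v = take n v @ [v ! n]"
    using step.hyps by (simp add: take_Suc_conv_app_nth)
  moreover have "sublist (take (Suc n) v) w"
    using assms(1) sublist_order.order_trans[OF sublist_take] by blast
  ultimately have "Occ (take (Suc n) v) w = Occ (take n v) w"
    using Occ_snoc_eq_if_not_cst_explicit by metis
  with step.IH show ?case by simp
qed simp

lemma next_Occ_within_cst_parent_len:
  assumes j: "j \<in> Occ v w" and y: "y \<in> Occ v w" "j < y" "y < j + length v"
  shows "\<exists>y'\<in>Occ v w. j < y' \<and> y' \<le> j + cst_parent_len w v"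
proof -
  let ?Y = "{z\<in>Occ v w. j < z}"
  define d where "d = Min ?Y - j"
  have fin: "finite ?Y" using finite_Occ[of v w] by simp
  have "?Y \<noteq> {}" using y by blast
  then have next_occ: "j + d \<in> Occ v w" "0 < d"
    using Min_in[OF fin] by (auto simp: d_def)
  have "Min ?Y \<le> y" using Min_le[OF fin] y by blast
  then have "d < length v" using y by (simp add: d_def)
  have no_between: False if "z \<in> Occ v w" "j < z" "z < j + d" for z
    using Min_le[OF fin, of z] that by (simp add: d_def)
  have square: "sublist (take d v @ take d v) w"
    using square_at_Occ_pair[OF j next_occ(1)] \<open>d < length v\<close> by simp
  then have "sublist (take d v) w"
    using sublist_order.order_trans[OF sublist_append_leftI] by blast
  moreover note square
  moreover have "primitive (take d v)"
    using primitive_take_gap_Occ[OF j next_occ \<open>d < length v\<close>] no_between by blast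
  ultimately have "cst_explicit w (take d v)" by (simp add: cst_explicit_def)
  moreover have "strict_prefix (take d v) v"
    using \<open>d < length v\<close> by (simp add: strict_prefix_def take_is_prefix)
  ultimately have "length (take d v) \<le> cst_parent_len w v"
    by (rule length_le_cst_parent_len)
  then show ?thesis using next_occ \<open>d < length v\<close> by (intro bexI[of _ "j + d"]) auto
qed

lemma UN_intervals_diff_shorter:
  fixes S :: "nat set"
  assumes fin: "finite S" and "m \<le> L"
    and close: "\<And>j y. j \<in> S \<Longrightarrow> y \<in> S \<Longrightarrow> j < y \<Longrightarrow> y < j + L \<Longrightarrow> \<exists>y'\<in>S. j < y' \<and> y' \<le> j + m"
  shows "(\<Union>j\<in>S. {j..<j + L}) - (\<Union>j\<in>S. {j..<j + m})
           = (\<Union>j\<in>{j\<in>S. \<forall>y\<in>S. j < y \<longrightarrow> j + L \<le> y}. {j + m..<j + L})"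
    (is "?SL - ?Sm = (\<Union>j\<in>?G. _)")
proof
  show "?SL - ?Sm \<subseteq> (\<Union>j\<in>?G. {j + m..<j + L})"
  proof
    fix x assume x: "x \<in> ?SL - ?Sm"
    then obtain j' where j': "j' \<in> S" "j' \<le> x" "x < j' + L" by auto
    let ?A = "{j\<in>S. j \<le> x}"
    have finA: "finite ?A" using fin by simp
    define j where "j = Max ?A"
    have "?A \<noteq> {}" using j' by blast
    then have j: "j \<in> S" "j \<le> x" using Max_in[OF finA] by (simp_all add: j_def)
    have j_max: "z \<le> j" if "z \<in> S" "z \<le> x" for z
      using Max_ge[OF finA] that by (simp add: j_def)
    have "x < j + L" using j' j_max[OF j'(1,2)] by simp
    moreover have "j + m \<le> x"
      using x j by (auto simp: not_le)
    moreover have "j \<in> ?G"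
    proof -
      have "j + L \<le> y" if y: "y \<in> S" "j < y" for y
      proof (rule ccontr)
        assume "\<not> j + L \<le> y"
        then obtain y' where "y' \<in> S" "j < y'" "y' \<le> j + m" using close[OF j(1) y] by auto
        then show False using j_max \<open>j + m \<le> x\<close> by fastforce
      qed
      with j show ?thesis by simp
    qed
    ultimately show "x \<in> (\<Union>j\<in>?G. {j + m..<j + L})" by auto
  qed
next
  show "(\<Union>j\<in>?G. {j + m..<j + L}) \<subseteq> ?SL - ?Sm"
  proof
    fix x assume "x \<in> (\<Union>j\<in>?G. {j + m..<j + L})"
    then obtain j where j: "j \<in> ?G" "j + m \<le> x" "x < j + L" by auto
    then have "x \<in> ?SL" using \<open>m \<le> L\<close> by (intro UN_I[of j]) auto
    moreover have "x \<notin> {j'..<j' + m}" if "j' \<in> S" for j'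
      using j that by (cases "j' \<le> j") (auto simp: not_le)
    ultimately show "x \<in> ?SL - ?Sm" by auto
  qed
qed

lemma card_UN_intervals_shorter:
  fixes S :: "nat set"
  assumes fin: "finite S" and "m \<le> L"
    and close: "\<And>j y. j \<in> S \<Longrightarrow> y \<in> S \<Longrightarrow> j < y \<Longrightarrow> y < j + L \<Longrightarrow> \<exists>y'\<in>S. j < y' \<and> y' \<le> j + m"
  shows "card (\<Union>j\<in>S. {j..<j + L})
           = card (\<Union>j\<in>S. {j..<j + m}) + (L - m) * card {j\<in>S. \<forall>y\<in>S. j < y \<longrightarrow> j + L \<le> y}"
    (is "card ?SL = card ?Sm + _ * card ?G")
proof -
  have "finite ?SL" using fin by simp
  moreover have "?Sm \<subseteq> ?SL" using \<open>m \<le> L\<close> by fastforce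
  ultimately have "card ?SL = card ?Sm + card (?SL - ?Sm)"
    by (metis card_Diff_subset card_mono finite_subset le_add_diff_inverse)
  also have "?SL - ?Sm = (\<Union>j\<in>?G. {j + m..<j + L})"
    by (rule UN_intervals_diff_shorter[OF assms])
  also have "card \<dots> = (\<Sum>j\<in>?G. card {j + m..<j + L})"
  proof (rule card_UN_disjoint)
    show "finite ?G" using fin by simp
    show "\<forall>i\<in>?G. \<forall>j\<in>?G. i \<noteq> j \<longrightarrow> {i + m..<i + L} \<inter> {j + m..<j + L} = {}"
      by (auto simp: neq_iff)
  qed simp
  also have "\<dots> = (L - m) * card ?G" by simp
  finally show ?thesis .
qed

theorem lemma1:
  fixes w v :: "'a list" and i :: nat
  assumes "sublist v w" and "cst_explicit w v" and "v \<noteq> []"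
    and "1 \<le> i" and "i \<le> edge_len w v"
  shows "int (cov w (take (length v - i) v)) = int (cov w v) - int i * int (Delta w v)"
proof -
  define m where "m = length v - i"
  have m: "cst_parent_len w v < m" "m \<le> length v" "length v - m = i"
    using assms(4,5) by (auto simp: m_def edge_len_def)
  have close: "\<exists>y'\<in>Occ v w. j < y' \<and> y' \<le> j + m"
    if "j \<in> Occ v w" "y \<in> Occ v w" "j < y" "y < j + length v" for j y
    using next_Occ_within_cst_parent_len[OF that] m(1) by fastforce
  have "cov w v = cov w (take m v) + i * Delta w v"
    using card_UN_intervals_shorter[OF finite_Occ m(2) close] m(2,3)
    by (simp add: cov_def Covered_eq_card_UN Occ_take_on_cst_edge[OF assms(1) m(1,2)]
        Delta_eq_card)
  then show ?thesis by (simp add: m_def)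
qed

end
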